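(* Let $t$ be a positive integer and let $M_1,M_2$ be matroids on a finite set $E$ such that $M_2$ is a quotient of $M_1$, and let $\rho=r_{M_1}+r_{M_2}$. Then $r(M_1)-r(M_2)\le t$ if and only if the polymatroid $\rho$ does not have the (rank function of the) uniform matroid $U_{t+1,t+1}$ as a minor.
   Context: A polymatroid on $E$ is a function $\rho:2^E\to\mathbb{Z}$ that is normalized, non-decreasing and submodular; matroid rank functions are polymatroids. For matroids $Q,L$ on $E$, $Q$ is a quotient of $L$ if there is a matroid $M$ and $A\subseteq E(M)$ with $L=M\backslash A$ and $Q=M/A$. Polymatroid minors: $\rho_{\backslash A}(X)=\rho(X)$, $\rho_{/A}(X)=\rho(X\cup A)-\rho(A)$ for $X\subseteq E-A$; minors are $(\rho_{\backslash A})_{/B}$ for disjoint $A,B\subseteq E$ (up to isomorphism). $U_{t+1,t+1}$ is the free matroid on $t+1$ elements, whose rank function is $X\mapsto|X|$. *)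

theory Defs
  imports Main
begin

definition polymatroid :: "'a set \<Rightarrow> ('a set \<Rightarrow> int) \<Rightarrow> bool" where
  "polymatroid E \<rho> \<longleftrightarrow> finite E \<and> \<rho> {} = 0 \<and>
     (\<forall>X Y. X \<subseteq> Y \<and> Y \<subseteq> E \<longrightarrow> \<rho> X \<le> \<rho> Y) \<and>
     (\<forall>X Y. X \<subseteq> E \<and> Y \<subseteq> E \<longrightarrow> \<rho> (X \<union> Y) + \<rho> (X \<inter> Y) \<le> \<rho> X + \<rho> Y)"

definition matroid :: "'a set \<Rightarrow> ('a set \<Rightarrow> int) \<Rightarrow> bool" where
  "matroid E r \<longleftrightarrow> polymatroid E r \<and> (\<forall>X \<subseteq> E. r X \<le> int (card X))"

definition pm_delete :: "('a set \<Rightarrow> int) \<Rightarrow> 'a set \<Rightarrow> ('a set \<Rightarrow> int)" where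
  "pm_delete \<rho> A = (\<lambda>X. \<rho> X)"

definition pm_contract :: "('a set \<Rightarrow> int) \<Rightarrow> 'a set \<Rightarrow> ('a set \<Rightarrow> int)" where
  "pm_contract \<rho> A = (\<lambda>X. \<rho> (X \<union> A) - \<rho> A)"

text \<open>Q (rank rQ) is a quotient of L (rank rL) on E: there is a matroid M on a
  ground set E \<union> A (A disjoint from E, realised as Inl ` E \<union> Inr ` A with A finite,
  which loses no generality up to relabelling) with L = M \ A and Q = M / A.\<close>
definition is_quotient :: "'a set \<Rightarrow> ('a set \<Rightarrow> int) \<Rightarrow> ('a set \<Rightarrow> int) \<Rightarrow> bool" where
  "is_quotient E rQ rL \<longleftrightarrow>
     (\<exists>(rM :: ('a + nat) set \<Rightarrow> int) A. finite A \<and> matroid (Inl ` E \<union> Inr ` A) rM \<and>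
        (\<forall>X \<subseteq> E. rL X = pm_delete rM (Inr ` A) (Inl ` X) \<and>
                   rQ X = pm_contract rM (Inr ` A) (Inl ` X)))"

definition has_minor :: "'a set \<Rightarrow> ('a set \<Rightarrow> int) \<Rightarrow> 'b set \<Rightarrow> ('b set \<Rightarrow> int) \<Rightarrow> bool" where
  "has_minor E \<rho> F \<sigma> \<longleftrightarrow>
     (\<exists>A B f. A \<subseteq> E \<and> B \<subseteq> E \<and> A \<inter> B = {} \<and> bij_betw f (E - A - B) F \<and>
        (\<forall>X \<subseteq> E - A - B. pm_contract (pm_delete \<rho> A) B X = \<sigma> (f ` X)))"

text \<open>Rank function of the free matroid U_{n,n}, on ground set {..<n}.\<close>
definition free_rank :: "nat set \<Rightarrow> int" where
  "free_rank X = int (card X)"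

end

theory Submission
  imports Defs
begin

text \<open>Write \<rho> = r1 + r2. Since M2 is a quotient of M1, the gap r1 - r2 is monotone.
  A free minor of \<rho> on Z after contracting B forces every element of Z to raise \<rho> over B by
  exactly one, and the monotone gap makes that unit come from r1; so Z is a set of loops of
  M2/B and independent in M1/B, which makes the gap grow by |Z| = t + 1.
  Conversely, if the gap exceeds t, take a basis B of M2 and extend it by t + 1 elements
  independent in M1/B; these are loops of M2/B, so \<rho>/B restricted to them is free.\<close>

lemma polymatroid_finite: "polymatroid E r \<Longrightarrow> finite E"
  by (simp add: polymatroid_def)

lemma polymatroid_empty: "polymatroid E r \<Longrightarrow> r {} = 0"
  unfolding polymatroid_def by blast

lemma polymatroid_mono: "polymatroid E r \<Longrightarrow> X \<subseteq> Y \<Longrightarrow> Y \<subseteq> E \<Longrightarrow> r X \<le> r Y"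
  unfolding polymatroid_def by blast

lemma polymatroid_submodular:
  "polymatroid E r \<Longrightarrow> X \<subseteq> E \<Longrightarrow> Y \<subseteq> E \<Longrightarrow> r (X \<union> Y) + r (X \<inter> Y) \<le> r X + r Y"
  unfolding polymatroid_def by blast

lemma polymatroid_nonneg: "polymatroid E r \<Longrightarrow> X \<subseteq> E \<Longrightarrow> 0 \<le> r X"
  using polymatroid_mono[of E r "{}" X] polymatroid_empty[of E r] by auto

lemma polymatroid_Un_eq_if_insert_le:
  assumes r: "polymatroid E r" and "S \<subseteq> E" "Y \<subseteq> E"
    and loops: "\<forall>e\<in>Y. r (insert e S) \<le> r S"
  shows "r (S \<union> Y) = r S"
proof -
  have "finite Y"
    using polymatroid_finite[OF r] \<open>Y \<subseteq> E\<close> finite_subset by blast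
  then have "r (S \<union> Y) \<le> r S"
    using \<open>Y \<subseteq> E\<close> loops
  proof (induction Y rule: finite_induct)
    case empty
    then show ?case by simp
  next
    case (insert e Y)
    have SY: "S \<union> Y \<subseteq> E" and eS: "insert e S \<subseteq> E"
      using insert.prems \<open>S \<subseteq> E\<close> by auto
    have "(S \<union> Y) \<union> insert e S = S \<union> insert e Y"
      by auto
    then have "r (S \<union> insert e Y) + r ((S \<union> Y) \<inter> insert e S) \<le> r (S \<union> Y) + r (insert e S)"
      using polymatroid_submodular[OF r SY eS] by simp
    moreover have "r S \<le> r ((S \<union> Y) \<inter> insert e S)"
      by (rule polymatroid_mono[OF r]) (use eS in auto)
    moreover have "r (S \<union> Y) \<le> r S" "r (insert e S) \<le> r S"
      using insert.IH insert.prems by auto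
    ultimately show ?case
      by linarith
  qed
  moreover have "r S \<le> r (S \<union> Y)"
    by (rule polymatroid_mono[OF r]) (use assms(2,3) in auto)
  ultimately show ?thesis
    by linarith
qed

lemma matroid_polymatroid: "matroid E r \<Longrightarrow> polymatroid E r"
  unfolding matroid_def by blast

lemma matroid_rank_le_card: "matroid E r \<Longrightarrow> X \<subseteq> E \<Longrightarrow> r X \<le> int (card X)"
  unfolding matroid_def by blast

lemma matroid_rank_Un_le:
  assumes r: "matroid E r" and "S \<subseteq> E" "Y \<subseteq> E"
  shows "r (S \<union> Y) \<le> r S + int (card Y)"
proof -
  have "r (S \<union> Y) + r (S \<inter> Y) \<le> r S + r Y"
    using polymatroid_submodular[OF matroid_polymatroid[OF r]] assms(2,3) .
  moreover have "0 \<le> r (S \<inter> Y)"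
    using polymatroid_nonneg[OF matroid_polymatroid[OF r]] assms(2) by blast
  moreover have "r Y \<le> int (card Y)"
    using matroid_rank_le_card[OF r assms(3)] .
  ultimately show ?thesis
    by linarith
qed

lemma matroid_augment:
  assumes r: "matroid E r" and "B \<subseteq> E" and "int k \<le> r E - r B"
  shows "\<exists>Z. Z \<subseteq> E - B \<and> card Z = k \<and> r (Z \<union> B) = r B + int k"
  using \<open>int k \<le> r E - r B\<close>
proof (induction k)
  case 0
  show ?case by (intro exI[of _ "{}"]) auto
next
  case (Suc k)
  then obtain Z where Z: "Z \<subseteq> E - B" "card Z = k" "r (Z \<union> B) = r B + int k"
    by auto
  have ZB: "Z \<union> B \<subseteq> E"
    using Z \<open>B \<subseteq> E\<close> by auto
  have "\<not> (\<forall>e\<in>E. r (insert e (Z \<union> B)) \<le> r (Z \<union> B))"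
  proof
    assume "\<forall>e\<in>E. r (insert e (Z \<union> B)) \<le> r (Z \<union> B)"
    then have "r ((Z \<union> B) \<union> E) = r (Z \<union> B)"
      by (rule polymatroid_Un_eq_if_insert_le[OF matroid_polymatroid[OF r] ZB order_refl])
    with Suc.prems Z(3) ZB show False
      by (simp add: Un_absorb1)
  qed
  then obtain e where e: "e \<in> E" "r (Z \<union> B) < r (insert e (Z \<union> B))"
    by (auto simp: not_le)
  have "e \<notin> Z \<union> B"
    using e(2) by (metis insert_absorb less_irrefl)
  moreover have "r (insert e (Z \<union> B)) \<le> r (Z \<union> B) + 1"
    using matroid_rank_Un_le[OF r ZB, of "{e}"] e(1) by simp
  moreover have "finite Z"
    using Z(1) polymatroid_finite[OF matroid_polymatroid[OF r]] finite_subset by blast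
  ultimately show ?case
    using Z e by (intro exI[of _ "insert e Z"]) auto
qed

lemma matroid_basis_exists:
  assumes "matroid E r"
  shows "\<exists>B \<subseteq> E. int (card B) = r E \<and> r B = r E"
proof -
  have "0 \<le> r E" "r {} = 0"
    using polymatroid_nonneg polymatroid_empty matroid_polymatroid assms by blast+
  then show ?thesis
    using matroid_augment[OF assms, of "{}" "nat (r E)"] by auto
qed

definition free_in_contraction :: "('a set \<Rightarrow> int) \<Rightarrow> 'a set \<Rightarrow> 'a set \<Rightarrow> bool" where
  "free_in_contraction \<rho> B Z \<longleftrightarrow> (\<forall>X \<subseteq> Z. \<rho> (X \<union> B) = \<rho> B + int (card X))"

lemma has_minor_free_rank_iff:
  assumes "finite E"
  shows "has_minor E \<rho> {..<n} free_rank \<longleftrightarrow>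
    (\<exists>B Z. B \<subseteq> E \<and> Z \<subseteq> E - B \<and> card Z = n \<and> free_in_contraction \<rho> B Z)"
proof
  assume "has_minor E \<rho> {..<n} free_rank"
  then obtain A B f where AB: "A \<subseteq> E" "B \<subseteq> E" and f: "bij_betw f (E - A - B) {..<n}"
    and minor: "\<forall>X \<subseteq> E - A - B. pm_contract (pm_delete \<rho> A) B X = free_rank (f ` X)"
    unfolding has_minor_def by (elim exE conjE) (rule that)
  have "\<rho> (X \<union> B) = \<rho> B + int (card X)" if "X \<subseteq> E - A - B" for X
  proof -
    have "card (f ` X) = card X"
      using card_image inj_on_subset[OF bij_betw_imp_inj_on[OF f] that] .
    then show ?thesis
      using minor[rule_format, OF that] unfolding pm_contract_def pm_delete_def free_rank_def
      by simp
  qed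
  then have "free_in_contraction \<rho> B (E - A - B)"
    unfolding free_in_contraction_def by blast
  then show "\<exists>B Z. B \<subseteq> E \<and> Z \<subseteq> E - B \<and> card Z = n \<and> free_in_contraction \<rho> B Z"
    using AB bij_betw_same_card[OF f] by (intro exI[of _ B] exI[of _ "E - A - B"]) auto
next
  assume "\<exists>B Z. B \<subseteq> E \<and> Z \<subseteq> E - B \<and> card Z = n \<and> free_in_contraction \<rho> B Z"
  then obtain B Z where BZ: "B \<subseteq> E" "Z \<subseteq> E - B" "card Z = n"
    and free: "free_in_contraction \<rho> B Z"
    by blast
  have "finite Z"
    using BZ(2) \<open>finite E\<close> finite_subset by blast
  then obtain f where f: "bij_betw f Z {..<n}"
    using finite_same_card_bij[OF _ finite_lessThan] BZ(3) by auto
  have "pm_contract (pm_delete \<rho> (E - B - Z)) B X = free_rank (f ` X)" if "X \<subseteq> Z" for X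
  proof -
    have "card (f ` X) = card X"
      using card_image inj_on_subset[OF bij_betw_imp_inj_on[OF f] that] .
    then show ?thesis
      using free that unfolding free_in_contraction_def pm_contract_def pm_delete_def free_rank_def
      by simp
  qed
  moreover have "E - (E - B - Z) - B = Z"
    using BZ by auto
  ultimately show "has_minor E \<rho> {..<n} free_rank"
    unfolding has_minor_def using BZ f by (intro exI[of _ "E - B - Z"] exI[of _ B] exI[of _ f]) auto
qed

lemma matroid_free_in_contraction:
  assumes r: "matroid E r" and "B \<subseteq> E" "Z \<subseteq> E" and indep: "r (Z \<union> B) = r B + int (card Z)"
  shows "free_in_contraction r B Z"
  unfolding free_in_contraction_def
proof (intro allI impI)
  fix X assume "X \<subseteq> Z"
  then have XB: "X \<union> B \<subseteq> E" and ZX: "Z - X \<subseteq> E" and X: "X \<subseteq> E"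
    using assms(2,3) by auto
  have "finite Z"
    using \<open>Z \<subseteq> E\<close> polymatroid_finite[OF matroid_polymatroid[OF r]] finite_subset by blast
  moreover have "Z \<inter> X = X"
    using \<open>X \<subseteq> Z\<close> by blast
  ultimately have "int (card Z) = int (card X) + int (card (Z - X))"
    using card_Int_Diff[of Z X] by simp
  moreover have "(X \<union> B) \<union> (Z - X) = Z \<union> B"
    using \<open>X \<subseteq> Z\<close> by blast
  then have "r (Z \<union> B) \<le> r (X \<union> B) + int (card (Z - X))"
    using matroid_rank_Un_le[OF r XB ZX] by simp
  moreover have "r (X \<union> B) \<le> r B + int (card X)"
    using matroid_rank_Un_le[OF r \<open>B \<subseteq> E\<close> X] unfolding Un_commute[of B X] .
  ultimately show "r (X \<union> B) = r B + int (card X)"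
    using indep by linarith
qed

lemma quotient_rank_gap_mono:
  assumes "is_quotient E r2 r1" "X \<subseteq> Y" "Y \<subseteq> E"
  shows "r1 X - r2 X \<le> r1 Y - r2 Y"
proof -
  obtain rM :: "('a + nat) set \<Rightarrow> int" and A where
    M: "matroid (Inl ` E \<union> Inr ` A) rM"
    and r12: "\<forall>X \<subseteq> E. r1 X = rM (Inl ` X) \<and> r2 X = rM (Inl ` X \<union> Inr ` A) - rM (Inr ` A)"
    using assms(1) unfolding is_quotient_def pm_delete_def pm_contract_def by blast
  have union: "Inl ` Y \<union> (Inl ` X \<union> Inr ` A) = Inl ` Y \<union> Inr ` A"
    and inter: "Inl ` Y \<inter> (Inl ` X \<union> Inr ` A) = Inl ` X"
    using assms(2) by auto
  have "Inl ` Y \<subseteq> Inl ` E \<union> Inr ` A" "Inl ` X \<union> Inr ` A \<subseteq> Inl ` E \<union> Inr ` A"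
    using assms(2,3) by auto
  from polymatroid_submodular[OF matroid_polymatroid[OF M] this]
  have "rM (Inl ` Y \<union> Inr ` A) + rM (Inl ` X) \<le> rM (Inl ` Y) + rM (Inl ` X \<union> Inr ` A)"
    unfolding union inter .
  moreover have "X \<subseteq> E"
    using assms(2,3) by blast
  ultimately show ?thesis
    using r12[rule_format, OF \<open>X \<subseteq> E\<close>] r12[rule_format, OF \<open>Y \<subseteq> E\<close>] by linarith
qed

lemma quotient_free_sum_loops:
  assumes r1: "matroid E r1" and r2: "matroid E r2" and q: "is_quotient E r2 r1"
    and "B \<subseteq> E" "Z \<subseteq> E" and free: "free_in_contraction (\<lambda>X. r1 X + r2 X) B Z"
  shows "r2 (B \<union> Z) = r2 B"
proof (rule polymatroid_Un_eq_if_insert_le[OF matroid_polymatroid[OF r2] assms(4,5)], intro ballI)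
  fix e assume "e \<in> Z"
  then have "B \<subseteq> insert e B" "insert e B \<subseteq> E"
    using assms(4,5) by auto
  then have "r1 B - r2 B \<le> r1 (insert e B) - r2 (insert e B)" "r1 B \<le> r1 (insert e B)"
    using quotient_rank_gap_mono[OF q] polymatroid_mono[OF matroid_polymatroid[OF r1]] by blast+
  moreover have "r1 (insert e B) + r2 (insert e B) = r1 B + r2 B + 1"
    using free[unfolded free_in_contraction_def, rule_format, of "{e}"] \<open>e \<in> Z\<close> by simp
  ultimately show "r2 (insert e B) \<le> r2 B"
    by linarith
qed

lemma quotient_free_minor_card_le_gap:
  assumes r1: "matroid E r1" and r2: "matroid E r2" and q: "is_quotient E r2 r1"
    and "B \<subseteq> E" "Z \<subseteq> E - B" and free: "free_in_contraction (\<lambda>X. r1 X + r2 X) B Z"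
  shows "int (card Z) \<le> r1 E - r2 E"
proof -
  have "Z \<subseteq> E" "Z \<union> B \<subseteq> E"
    using assms(4,5) by blast+
  then have "r2 (Z \<union> B) = r2 B"
    using quotient_free_sum_loops[OF r1 r2 q \<open>B \<subseteq> E\<close> _ free] by (simp add: Un_commute)
  moreover have "r1 (Z \<union> B) + r2 (Z \<union> B) = r1 B + r2 B + int (card Z)"
    using free[unfolded free_in_contraction_def, rule_format, of Z] by simp
  moreover have "r1 {} - r2 {} \<le> r1 B - r2 B" "r1 (Z \<union> B) - r2 (Z \<union> B) \<le> r1 E - r2 E"
    using quotient_rank_gap_mono[OF q empty_subsetI \<open>B \<subseteq> E\<close>]
      quotient_rank_gap_mono[OF q \<open>Z \<union> B \<subseteq> E\<close> order_refl] .
  moreover have "r1 {} = 0" "r2 {} = 0"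
    using polymatroid_empty matroid_polymatroid r1 r2 by blast+
  ultimately show ?thesis
    by linarith
qed

lemma quotient_free_minor_of_gap:
  assumes r1: "matroid E r1" and r2: "matroid E r2" and gap: "int k \<le> r1 E - r2 E"
  shows "\<exists>B Z. B \<subseteq> E \<and> Z \<subseteq> E - B \<and> card Z = k \<and> free_in_contraction (\<lambda>X. r1 X + r2 X) B Z"
proof -
  obtain B where B: "B \<subseteq> E" "int (card B) = r2 E" "r2 B = r2 E"
    using matroid_basis_exists[OF r2] by blast
  have "int k \<le> r1 E - r1 B"
    using gap B matroid_rank_le_card[OF r1 \<open>B \<subseteq> E\<close>] by linarith
  then obtain Z where Z: "Z \<subseteq> E - B" "card Z = k" "r1 (Z \<union> B) = r1 B + int k"
    using matroid_augment[OF r1 \<open>B \<subseteq> E\<close>] by blast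
  have "Z \<subseteq> E"
    using Z(1) by blast
  have "r2 (X \<union> B) = r2 B" if "X \<subseteq> Z" for X
  proof -
    have "B \<subseteq> X \<union> B" "X \<union> B \<subseteq> E"
      using \<open>B \<subseteq> E\<close> \<open>Z \<subseteq> E\<close> that by blast+
    then show ?thesis
      using polymatroid_mono[OF matroid_polymatroid[OF r2]] B(3) by (metis order_refl order_antisym)
  qed
  moreover have "free_in_contraction r1 B Z"
    using matroid_free_in_contraction[OF r1 \<open>B \<subseteq> E\<close> \<open>Z \<subseteq> E\<close> Z(3)[folded Z(2)]] .
  ultimately have "free_in_contraction (\<lambda>X. r1 X + r2 X) B Z"
    unfolding free_in_contraction_def by simp
  then show ?thesis
    using B(1) Z(1,2) by blast
qed

theorem theorem5p4:
  fixes t :: nat and E :: "'a set" and r1 r2 :: "'a set \<Rightarrow> int"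
  assumes "0 < t"
    and "finite E"
    and "matroid E r1" and "matroid E r2"
    and "is_quotient E r2 r1"
  shows "r1 E - r2 E \<le> int t \<longleftrightarrow>
         \<not> has_minor E (\<lambda>X. r1 X + r2 X) {..<t+1} free_rank"
  unfolding has_minor_free_rank_iff[OF \<open>finite E\<close>]
proof
  assume gap: "r1 E - r2 E \<le> int t"
  show "\<not> (\<exists>B Z. B \<subseteq> E \<and> Z \<subseteq> E - B \<and> card Z = t + 1 \<and>
      free_in_contraction (\<lambda>X. r1 X + r2 X) B Z)"
  proof (intro notI, elim exE conjE)
    fix B Z assume "B \<subseteq> E" "Z \<subseteq> E - B" "card Z = t + 1"
      and free: "free_in_contraction (\<lambda>X. r1 X + r2 X) B Z"
    have "int (card Z) \<le> r1 E - r2 E"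
      using quotient_free_minor_card_le_gap[OF assms(3-5) \<open>B \<subseteq> E\<close> \<open>Z \<subseteq> E - B\<close> free] .
    with gap \<open>card Z = t + 1\<close> show False
      by simp
  qed
next
  assume no_minor: "\<not> (\<exists>B Z. B \<subseteq> E \<and> Z \<subseteq> E - B \<and> card Z = t + 1 \<and>
      free_in_contraction (\<lambda>X. r1 X + r2 X) B Z)"
  show "r1 E - r2 E \<le> int t"
  proof (rule ccontr)
    assume "\<not> r1 E - r2 E \<le> int t"
    then have "int (t + 1) \<le> r1 E - r2 E"
      by simp
    with no_minor show False
      using quotient_free_minor_of_gap[OF assms(3,4)] by blast
  qed
qed

end
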